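(* For each $p\ge2$ let $y=(y_1,\dots,y_p)$ with $y_i=\mu_i+\epsilon_i$, $\epsilon_i$ i.i.d. $N(0,1)$, where $\mu_1=r\sqrt{2\log p}$ for a fixed constant $r>1$ and $\mu_i=0$ for $i\ge2$. Let $\lambda_1\ge\lambda_2$ be the two largest values among $|y_1|,\dots,|y_p|$, and let $\tilde\Phi=1-\Phi$ be the standard Gaussian survival function. Then the $p$-value $\tilde\Phi(\lambda_1)/\tilde\Phi(\lambda_2)$ converges to $0$ in probability as $p\to\infty$; in particular, for every fixed $\alpha\in(0,1)$, $\Pr\big(\tilde\Phi(\lambda_1)/\tilde\Phi(\lambda_2)\le\alpha\big)\to1$.
   Context: This is the setting of groups of size one with an orthonormal design reduced to the identity design $X=I_p$, $n=p$; here $\lambda_1,\lambda_2$ are the first two knots of the LASSO solution path and $\tilde\Phi(\lambda_1)/\tilde\Phi(\lambda_2)$ is the first-step truncated-$\chi$ $p$-value. *)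

theory Defs
  imports "HOL-Probability.Probability"
begin

definition std_normal :: "real measure" where
  "std_normal = density lborel std_normal_density"

definition Phi_tilde :: "real \<Rightarrow> real" where
  "Phi_tilde x = measure std_normal {x<..}"

text \<open>Sample space for dimension p: noise vector (eps_0,...,eps_{p-1}) i.i.d. N(0,1).\<close>
definition noise_space :: "nat \<Rightarrow> (nat \<Rightarrow> real) measure" where
  "noise_space p = PiM {..<p} (\<lambda>_. std_normal)"

definition mu :: "real \<Rightarrow> nat \<Rightarrow> nat \<Rightarrow> real" where
  "mu r p i = (if i = 0 then r * sqrt (2 * ln (real p)) else 0)"

definition obs :: "real \<Rightarrow> nat \<Rightarrow> (nat \<Rightarrow> real) \<Rightarrow> nat \<Rightarrow> real" where
  "obs r p eps i = mu r p i + eps i"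

text \<open>k-th largest value (0-based, counted with multiplicity) of |y_0|,...,|y_{p-1}|.\<close>
definition knot :: "nat \<Rightarrow> (nat \<Rightarrow> real) \<Rightarrow> nat \<Rightarrow> real" where
  "knot p y k = rev (sort (map (\<lambda>i. \<bar>y i\<bar>) [0..<p])) ! k"

definition pval :: "real \<Rightarrow> nat \<Rightarrow> (nat \<Rightarrow> real) \<Rightarrow> real" where
  "pval r p eps = Phi_tilde (knot p (obs r p eps) 0) / Phi_tilde (knot p (obs r p eps) 1)"

end

theory Submission
  imports Defs "HOL-Real_Asymp.Real_Asymp"
begin

(*
  Write s = sqrt (2 ln p) and r = 1 + 3e with e > 0.  On the "moderate noise" event
  |eps_0| <= e s and |eps_i| <= (1+e) s for i >= 1, the largest knot is at least
  |y_0| >= (1+2e) s and the second knot is at most (1+e) s, so by monotonicity of the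
  Gaussian survival function Phi~ and the elementary tail bounds
      phi (c+1) <= Phi~ c   and   Phi~ a <= 2 exp (-a^2/2)      (a, c >= 0)
  the p-value is at most  2 exp (-((1+2e) s)^2/2) / phi ((1+e) s + 1),  which tends to 0
  because the exponent is a negative-definite quadratic in s.  A union bound shows that
  the complement of the moderate-noise event has probability at most
  2 p^(-e^2) + 2 p^(1-(1+e)^2) -> 0.
*)

section \<open>The standard normal distribution and its survival function\<close>

lemma prob_space_std_normal: "prob_space std_normal"
  unfolding std_normal_def by (simp add: prob_space_normal_density)

lemma sets_std_normal: "sets std_normal = sets borel"
  by (simp add: std_normal_def)

lemma nn_integral_std_normal_density_shift:
  "(\<integral>\<^sup>+x. ennreal (std_normal_density (x + a)) \<partial>lborel) = 1"
proof -
  have "(\<integral>\<^sup>+x. ennreal (std_normal_density x) \<partial>lborel) = 1"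
    by (subst nn_integral_eq_integral) (auto simp: normal_density_nonneg)
  moreover have "(\<integral>\<^sup>+x. ennreal (std_normal_density x) \<partial>lborel)
      = ennreal \<bar>1\<bar> * (\<integral>\<^sup>+x. ennreal (std_normal_density (a + 1 * x)) \<partial>lborel)"
    by (rule nn_integral_real_affine) auto
  ultimately show ?thesis by (simp add: add.commute)
qed

text \<open>Gaussian decay splits along a shift: \<open>t\<^sup>2 \<ge> x\<^sup>2 + (t - x)\<^sup>2\<close> for \<open>0 \<le> x \<le> t\<close>.\<close>
lemma std_normal_density_shift_le:
  assumes "0 \<le> x" "x \<le> t"
  shows "std_normal_density t \<le> exp (- x\<^sup>2/2) * std_normal_density (t - x)"
proof -
  have "t\<^sup>2 \<ge> x\<^sup>2 + (t-x)\<^sup>2" using assms by (simp add: power2_eq_square algebra_simps mult_mono)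
  then have "exp (- t\<^sup>2/2) \<le> exp (- x\<^sup>2/2) * exp (- (t-x)\<^sup>2/2)"
    by (simp add: exp_add[symmetric])
  then show ?thesis unfolding std_normal_density_def by (simp add: divide_right_mono)
qed

text \<open>Two-sided Gaussian tail bound \<open>P(|Z| > x) \<le> 2 exp (-x\<^sup>2/2)\<close>: the density on
  \<open>{|t| > x}\<close> is dominated by \<open>exp (-x\<^sup>2/2)\<close> times the sum of the two shifted densities.\<close>
lemma std_normal_two_sided_tail:
  assumes "0 \<le> x"
  shows "measure std_normal {t. x < \<bar>t\<bar>} \<le> 2 * exp (- x\<^sup>2/2)"
proof -
  let ?e = "exp (- x\<^sup>2/2)"
  have dominated: "std_normal_density t
      \<le> ?e * std_normal_density (t + (-x)) + ?e * std_normal_density (t + x)"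
    if "x < \<bar>t\<bar>" for t
  proof (cases "t \<ge> 0")
    case True
    then have "std_normal_density t \<le> ?e * std_normal_density (t - x)"
      using std_normal_density_shift_le assms that by simp
    moreover have "0 \<le> ?e * std_normal_density (t + x)" by simp
    ultimately show ?thesis by (simp only: diff_conv_add_uminus; linarith)
  next
    case False
    then have "std_normal_density (-t) \<le> ?e * std_normal_density (-t - x)"
      using std_normal_density_shift_le assms that by simp
    moreover have "std_normal_density (-t) = std_normal_density t"
      "std_normal_density (-t - x) = std_normal_density (t + x)"
      unfolding std_normal_density_def by (simp_all add: power2_eq_square algebra_simps)
    moreover have "0 \<le> ?e * std_normal_density (t - x)" by simp
    ultimately show ?thesis by (simp only: diff_conv_add_uminus; linarith)
  qed
  have "{t::real. x < \<bar>t\<bar>} \<in> sets borel" by measurable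
  then have "emeasure std_normal {t. x < \<bar>t\<bar>}
      = (\<integral>\<^sup>+t. ennreal (std_normal_density t) * indicator {t. x < \<bar>t\<bar>} t \<partial>lborel)"
    unfolding std_normal_def by (subst emeasure_density) auto
  also have "\<dots> \<le> (\<integral>\<^sup>+t. ennreal ?e * ennreal (std_normal_density (t + (-x)))
                      + ennreal ?e * ennreal (std_normal_density (t + x)) \<partial>lborel)"
    using dominated
    by (intro nn_integral_mono)
       (auto simp: indicator_def ennreal_mult'[symmetric] ennreal_plus[symmetric] simp del: ennreal_plus)
  also have "\<dots> = ennreal ?e * (\<integral>\<^sup>+t. ennreal (std_normal_density (t + (-x))) \<partial>lborel)
                  + ennreal ?e * (\<integral>\<^sup>+t. ennreal (std_normal_density (t + x)) \<partial>lborel)"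
    by (subst nn_integral_add) (auto simp: nn_integral_cmult)
  also have "\<dots> = ennreal (2 * ?e)"
    by (simp only: nn_integral_std_normal_density_shift)
       (simp add: ennreal_plus[symmetric] del: ennreal_plus)
  finally show ?thesis unfolding measure_def by (simp add: enn2real_leI)
qed

lemma Phi_tilde_nonneg: "0 \<le> Phi_tilde x"
  by (simp add: Phi_tilde_def)

lemma Phi_tilde_antimono: "x \<le> y \<Longrightarrow> Phi_tilde y \<le> Phi_tilde x"
proof -
  assume "x \<le> y"
  interpret prob_space std_normal by (rule prob_space_std_normal)
  show ?thesis unfolding Phi_tilde_def
    by (rule finite_measure_mono) (use \<open>x \<le> y\<close> sets_std_normal in auto)
qed

lemma Phi_tilde_measurable: "Phi_tilde \<in> borel_measurable borel"
proof -
  have "(\<lambda>x. - Phi_tilde x) \<in> borel_measurable borel"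
    by (rule borel_measurable_mono) (auto simp: mono_def Phi_tilde_antimono)
  then have "(\<lambda>x. - (- Phi_tilde x)) \<in> borel_measurable borel" by measurable
  then show ?thesis by simp
qed

lemma Phi_tilde_upper:
  assumes "0 \<le> a"
  shows "Phi_tilde a \<le> 2 * exp (- a\<^sup>2/2)"
proof -
  interpret prob_space std_normal by (rule prob_space_std_normal)
  have "Phi_tilde a \<le> measure std_normal {t. a < \<bar>t\<bar>}" unfolding Phi_tilde_def
    by (rule finite_measure_mono) (auto simp: sets_std_normal)
  then show ?thesis using std_normal_two_sided_tail[OF assms] by linarith
qed

text \<open>Lower tail bound: the mass of \<open>(c, c+1]\<close> is at least the density at its right end.\<close>
lemma Phi_tilde_lower:
  assumes "0 \<le> c"
  shows "std_normal_density (c+1) \<le> Phi_tilde c"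
proof -
  interpret prob_space std_normal by (rule prob_space_std_normal)
  let ?d = "std_normal_density (c+1)"
  have "ennreal ?d = (\<integral>\<^sup>+t. ennreal ?d * indicator {c<..c+1} t \<partial>lborel)"
    by (simp add: nn_integral_cmult_indicator)
  also have "\<dots> \<le> (\<integral>\<^sup>+t. ennreal (std_normal_density t) * indicator {c<..} t \<partial>lborel)"
  proof (rule nn_integral_mono)
    fix t :: real
    show "ennreal ?d * indicator {c<..c+1} t \<le> ennreal (std_normal_density t) * indicator {c<..} t"
    proof (cases "t \<in> {c<..c+1}")
      case True
      then have "t\<^sup>2 \<le> (c+1)\<^sup>2" using assms by (intro power_mono) auto
      then have "?d \<le> std_normal_density t" unfolding std_normal_density_def
        by (intro mult_left_mono) auto
      then show ?thesis using True by (auto simp: indicator_def)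
    qed (simp add: indicator_def)
  qed
  also have "\<dots> = emeasure std_normal {c<..}"
    unfolding std_normal_def by (subst emeasure_density) auto
  finally show ?thesis unfolding Phi_tilde_def by (simp add: emeasure_eq_measure)
qed

section \<open>Order statistics of absolute values\<close>

text \<open>This characterisation by counting is all we need about sorting.\<close>
lemma knot_le_iff:
  assumes "k < p"
  shows "knot p y k \<le> t \<longleftrightarrow> card {i. i < p \<and> t < \<bar>y i\<bar>} \<le> k"
proof -
  define L where "L = map (\<lambda>i. \<bar>y i\<bar>) [0..<p]"
  define D where "D = rev (sort L)"
  have lenD: "length D = p" by (simp add: D_def L_def)
  have kn: "knot p y k = D ! k" by (simp add: knot_def D_def L_def)
  have srt: "sorted_wrt (\<lambda>a b. b \<le> a) D" unfolding D_def
    by (simp add: sorted_wrt_rev)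
  have mono: "D ! j \<le> D ! i" if "i \<le> j" "j < p" for i j
  proof (cases "i = j")
    case False
    then show ?thesis using sorted_wrt_nth_less[OF srt, of i j] that lenD by simp
  qed simp
  have "mset (filter ((<) t) D) = mset (filter ((<) t) L)"
    by (simp add: D_def mset_filter)
  then have "length (filter ((<) t) D) = length (filter ((<) t) L)"
    by (metis size_mset)
  then have count: "card {i. i < p \<and> t < \<bar>y i\<bar>} = card {j. j < p \<and> t < D ! j}"
    by (simp add: L_def lenD length_filter_conv_card cong: conj_cong)
  show ?thesis
  proof
    assume "knot p y k \<le> t"
    then have "{j. j < p \<and> t < D ! j} \<subseteq> {..<k}"
      using mono kn by (auto simp: not_less) (meson le_less_trans not_less order_trans)
    then show "card {i. i < p \<and> t < \<bar>y i\<bar>} \<le> k" using count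
      by (metis card_lessThan card_mono finite_lessThan)
  next
    assume a: "card {i. i < p \<and> t < \<bar>y i\<bar>} \<le> k"
    show "knot p y k \<le> t"
    proof (rule ccontr)
      assume "\<not> knot p y k \<le> t"
      then have "{..k} \<subseteq> {j. j < p \<and> t < D ! j}"
        using mono kn assms by auto (meson le_less_trans less_le_trans not_le)+
      then have "card {..k} \<le> card {j. j < p \<and> t < D ! j}" by (intro card_mono) auto
      then show False using a count by simp
    qed
  qed
qed

lemma abs_le_knot0:
  assumes "j < p" shows "\<bar>y j\<bar> \<le> knot p y 0"
proof (rule ccontr)
  assume "\<not> \<bar>y j\<bar> \<le> knot p y 0"
  then have "j \<in> {i. i < p \<and> knot p y 0 < \<bar>y i\<bar>}" using assms by auto
  then have "card {i. i < p \<and> knot p y 0 < \<bar>y i\<bar>} \<noteq> 0" by (auto simp: card_eq_0_iff)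
  then show False using knot_le_iff[of 0 p y "knot p y 0"] assms by fastforce
qed

lemma knot1_le:
  assumes "1 < p" "\<And>i. i < p \<Longrightarrow> i \<noteq> j \<Longrightarrow> \<bar>y i\<bar> \<le> c"
  shows "knot p y 1 \<le> c"
proof -
  have "{i. i < p \<and> c < \<bar>y i\<bar>} \<subseteq> {j}" using assms(2) by force
  then have "card {i. i < p \<and> c < \<bar>y i\<bar>} \<le> 1"
    using card_mono[of "{j}"] by fastforce
  then show ?thesis using knot_le_iff[OF assms(1)] by blast
qed

section \<open>Measurability\<close>

lemma prob_space_noise: "prob_space (noise_space p)"
  unfolding noise_space_def by (intro prob_space_PiM prob_space_std_normal)

lemma noise_component_measurable:
  assumes "i < p"
  shows "(\<lambda>w. w i) \<in> borel_measurable (noise_space p)"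
proof -
  have "(\<lambda>w. w i) \<in> noise_space p \<rightarrow>\<^sub>M std_normal"
    unfolding noise_space_def by (rule measurable_component_singleton) (use assms in simp)
  then show ?thesis using measurable_cong_sets[OF refl sets_std_normal, of "noise_space p"] by simp
qed

lemma knot_measurable:
  assumes "k < p"
  shows "(\<lambda>w. knot p (obs r p w) k) \<in> borel_measurable (noise_space p)"
proof (subst borel_measurable_iff_le, intro allI)
  fix a :: real
  have [measurable]: "(\<lambda>w. obs r p w i) \<in> borel_measurable (noise_space p)" if "i < p" for i
    unfolding obs_def using noise_component_measurable[OF that] by measurable
  have count: "real (card {i. i < p \<and> a < \<bar>y i\<bar>}) = (\<Sum>i<p. of_bool (a < \<bar>y i\<bar>))" for y
    by (simp add: lessThan_def Collect_conj_eq)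
  have "(\<lambda>w. \<Sum>i<p. of_bool (a < \<bar>obs r p w i\<bar>) :: real) \<in> borel_measurable (noise_space p)"
    by (intro borel_measurable_sum) measurable
  then have "{w \<in> space (noise_space p). (\<Sum>i<p. of_bool (a < \<bar>obs r p w i\<bar>)) \<le> real k}
      \<in> sets (noise_space p)" by measurable
  then show "{w \<in> space (noise_space p). knot p (obs r p w) k \<le> a} \<in> sets (noise_space p)"
    using knot_le_iff[OF assms] by (simp add: count[symmetric])
qed

lemma pval_measurable:
  assumes "2 \<le> p"
  shows "pval r p \<in> borel_measurable (noise_space p)"
proof -
  have [measurable]: "(\<lambda>w. knot p (obs r p w) 0) \<in> borel_measurable (noise_space p)"
    "(\<lambda>w. knot p (obs r p w) 1) \<in> borel_measurable (noise_space p)"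
    "Phi_tilde \<in> borel_measurable borel"
    using knot_measurable assms Phi_tilde_measurable by auto
  show ?thesis unfolding pval_def[abs_def] by measurable
qed

section \<open>A deterministic bound on the p-value\<close>

lemma pval_le_Phi_tilde_ratio:
  assumes "1 < p" "j < p" "a \<le> \<bar>obs r p w j\<bar>"
    "\<And>i. i < p \<Longrightarrow> i \<noteq> j \<Longrightarrow> \<bar>obs r p w i\<bar> \<le> c" "0 < Phi_tilde c"
  shows "pval r p w \<le> Phi_tilde a / Phi_tilde c"
proof -
  have "a \<le> knot p (obs r p w) 0" using abs_le_knot0[of j p "obs r p w"] assms by simp
  moreover have "knot p (obs r p w) 1 \<le> c" using knot1_le assms by blast
  ultimately show ?thesis unfolding pval_def
    by (intro frac_le) (use Phi_tilde_antimono Phi_tilde_nonneg assms(5) in auto)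
qed

lemma pval_nonneg: "0 \<le> pval r p w"
  unfolding pval_def by (simp add: Phi_tilde_nonneg)

lemma pval_le_on_moderate_noise:
  assumes p: "1 < p" and e: "0 < e" and r: "r = 1 + 3*e"
    and s: "s = sqrt (2 * ln (real p))"
    and w0: "\<bar>w 0\<bar> \<le> e * s" and wi: "\<And>i. i < p \<Longrightarrow> i \<noteq> 0 \<Longrightarrow> \<bar>w i\<bar> \<le> (1+e) * s"
  shows "pval r p w \<le> 2 * exp (- ((1+2*e) * s)\<^sup>2/2) / std_normal_density ((1+e) * s + 1)"
proof -
  have s0: "0 \<le> s" using s p by simp
  have signal: "(1+2*e) * s \<le> \<bar>obs r p w 0\<bar>"
  proof -
    have "obs r p w 0 = (1+2*e) * s + e * s + w 0" using r by (simp add: obs_def mu_def s algebra_simps)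
    then show ?thesis using w0 e s0 by auto
  qed
  have nulls: "\<bar>obs r p w i\<bar> \<le> (1+e) * s" if "i < p" "i \<noteq> 0" for i
    using wi[OF that] that by (simp add: obs_def mu_def)
  have dens_pos: "0 < std_normal_density ((1+e) * s + 1)" by (simp add: std_normal_density_def)
  have lower: "std_normal_density ((1+e) * s + 1) \<le> Phi_tilde ((1+e) * s)"
    by (rule Phi_tilde_lower) (use e s0 in simp)
  have "pval r p w \<le> Phi_tilde ((1+2*e) * s) / Phi_tilde ((1+e) * s)"
    by (rule pval_le_Phi_tilde_ratio[of p 0 _ r w]) (use p signal nulls lower dens_pos in auto)
  also have "\<dots> \<le> 2 * exp (- ((1+2*e) * s)\<^sup>2/2) / std_normal_density ((1+e) * s + 1)"
    by (rule frac_le) (use Phi_tilde_upper[of "(1+2*e) * s"] e s0 lower dens_pos Phi_tilde_nonneg in auto)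
  finally show ?thesis .
qed

section \<open>A union bound for the noise\<close>

lemma noise_component_tail:
  assumes "i < p" "0 \<le> x"
  shows "measure (noise_space p) {w \<in> space (noise_space p). x < \<bar>w i\<bar>} \<le> 2 * exp (- x\<^sup>2/2)"
proof -
  interpret product_prob_space "\<lambda>_. std_normal" "{..<p}"
    by (simp add: product_prob_space_def product_sigma_finite_def prob_space_std_normal
                  prob_space_imp_sigma_finite product_prob_space_axioms_def)
  have "emeasure (noise_space p) {w \<in> space (noise_space p). w i \<in> {t. x < \<bar>t\<bar>}}
      = emeasure std_normal {t. x < \<bar>t\<bar>}"
    unfolding noise_space_def
    by (rule emeasure_PiM_Collect_single) (use assms in \<open>auto simp: sets_std_normal\<close>)
  then show ?thesis using std_normal_two_sided_tail[OF assms(2)] by (simp add: measure_def)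
qed

lemma noise_exceedance_bound:
  assumes "\<And>i. 0 \<le> thr i"
  shows "measure (noise_space p) {w \<in> space (noise_space p). \<exists>i<p. thr i < \<bar>w i\<bar>}
           \<le> (\<Sum>i<p. 2 * exp (- (thr i)\<^sup>2/2))"
proof -
  let ?M = "noise_space p"
  have events: "{w \<in> space ?M. thr i < \<bar>w i\<bar>} \<in> sets ?M" if "i < p" for i
    using noise_component_measurable[OF that] by measurable
  have "{w \<in> space ?M. \<exists>i<p. thr i < \<bar>w i\<bar>} = (\<Union>i\<in>{..<p}. {w \<in> space ?M. thr i < \<bar>w i\<bar>})"
    by auto
  also have "measure ?M \<dots> \<le> (\<Sum>i<p. measure ?M {w \<in> space ?M. thr i < \<bar>w i\<bar>})"
    by (rule measure_UNION_le) (use events in auto)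
  also have "\<dots> \<le> (\<Sum>i<p. 2 * exp (- (thr i)\<^sup>2/2))"
    by (intro sum_mono noise_component_tail assms) simp
  finally show ?thesis .
qed

text \<open>Combining the two previous sections: for each dimension, the probability of a large
  p-value is bounded by the probability of non-moderate noise.\<close>
lemma pval_tail_bound:
  assumes p: "1 < p" and e: "0 < e" and r: "r = 1 + 3*e"
    and s: "s = sqrt (2 * ln (real p))"
    and t: "2 * exp (- ((1+2*e) * s)\<^sup>2/2) / std_normal_density ((1+e) * s + 1) \<le> t"
  shows "measure (noise_space p) {w \<in> space (noise_space p). t < \<bar>pval r p w\<bar>}
           \<le> 2 * exp (- (e * s)\<^sup>2/2) + real p * (2 * exp (- ((1+e) * s)\<^sup>2/2))"
proof -
  interpret prob_space "noise_space p" by (rule prob_space_noise)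
  let ?M = "noise_space p"
  define thr where "thr i = (if i = 0 then e * s else (1+e) * s)" for i :: nat
  have thr_nonneg: "0 \<le> thr i" for i using e s p by (simp add: thr_def)
  let ?Bad = "{w \<in> space ?M. \<exists>i<p. thr i < \<bar>w i\<bar>}"
  have "{w \<in> space ?M. t < \<bar>pval r p w\<bar>} \<subseteq> ?Bad"
  proof safe
    fix w assume "w \<in> space ?M" "t < \<bar>pval r p w\<bar>"
    moreover have "pval r p w \<le> t" if moderate: "\<forall>i<p. \<bar>w i\<bar> \<le> thr i"
    proof -
      have "\<bar>w 0\<bar> \<le> e * s" using moderate p by (auto simp: thr_def)
      moreover have "\<bar>w i\<bar> \<le> (1+e) * s" if "i < p" "i \<noteq> 0" for i
        using moderate[rule_format, of i] that by (simp add: thr_def)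
      ultimately show ?thesis using pval_le_on_moderate_noise[OF p e r s] t by (meson order_trans)
    qed
    ultimately show "\<exists>i<p. thr i < \<bar>w i\<bar>" using pval_nonneg by force
  qed
  then have "measure ?M {w \<in> space ?M. t < \<bar>pval r p w\<bar>} \<le> measure ?M ?Bad"
    by (intro finite_measure_mono) (use noise_component_measurable in measurable)
  also have "\<dots> \<le> (\<Sum>i<p. 2 * exp (- (thr i)\<^sup>2/2))"
    by (rule noise_exceedance_bound[OF thr_nonneg])
  also have "\<dots> \<le> (\<Sum>i<p. (if i = 0 then 2 * exp (- (e * s)\<^sup>2/2) else 0) + 2 * exp (- ((1+e) * s)\<^sup>2/2))"
    by (intro sum_mono) (auto simp: thr_def)
  also have "\<dots> = 2 * exp (- (e * s)\<^sup>2/2) + real p * (2 * exp (- ((1+e) * s)\<^sup>2/2))"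
    using p by (simp add: sum.distrib)
  finally show ?thesis .
qed

lemma exp_neg_quadratic_tendsto_0:
  fixes s :: "'a \<Rightarrow> real"
  assumes s: "filterlim s at_top F" and A: "A < 0"
  shows "((\<lambda>x. exp (A * (s x)\<^sup>2 + B * s x + C)) \<longlongrightarrow> 0) F"
proof -
  have s2: "filterlim (\<lambda>x. (s x)\<^sup>2) at_top F" using s by (intro filterlim_pow_at_top) auto
  have "((\<lambda>x. A + B / s x + C / (s x)\<^sup>2) \<longlongrightarrow> A + 0 + 0) F"
    by (intro tendsto_add tendsto_const tendsto_divide_0[OF tendsto_const]
              filterlim_at_top_imp_at_infinity s s2)
  then have "filterlim (\<lambda>x. (A + B / s x + C / (s x)\<^sup>2) * (s x)\<^sup>2) at_bot F"
    by (rule filterlim_tendsto_neg_mult_at_bot[OF _ _ s2]) (use A in simp)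
  moreover have "eventually (\<lambda>x. s x > 0) F" using s by (simp add: filterlim_at_top_dense)
  then have "eventually (\<lambda>x. (A + B / s x + C / (s x)\<^sup>2) * (s x)\<^sup>2 = A * (s x)\<^sup>2 + B * s x + C) F"
    by eventually_elim (simp add: field_simps power2_eq_square)
  ultimately have "filterlim (\<lambda>x. A * (s x)\<^sup>2 + B * s x + C) at_bot F"
    using filterlim_cong by fastforce
  then show ?thesis by (rule filterlim_compose[OF exp_at_bot])
qed

text \<open>The bound on the probability of non-moderate noise equals
  \<open>2 p^(-e\<^sup>2) + 2 p^(1-(1+e)\<^sup>2)\<close>, which vanishes.\<close>
lemma noise_bound_tendsto_0:
  assumes e: "0 < e"
  shows "(\<lambda>p::nat. 2 * exp (- (e * sqrt (2 * ln (real p)))\<^sup>2/2)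
     + real p * (2 * exp (- ((1+e) * sqrt (2 * ln (real p)))\<^sup>2/2))) \<longlonglongrightarrow> 0"
proof -
  have "1 < (1+e)\<^sup>2" using e by (simp add: power2_eq_square algebra_simps) (smt (verit) mult_pos_pos)
  then have lim: "(\<lambda>p::nat. 2 * real p powr (- e\<^sup>2) + 2 * real p powr (1 - (1+e)\<^sup>2)) \<longlonglongrightarrow> 2 * 0 + 2 * 0"
    using e by (intro tendsto_add tendsto_mult tendsto_const
                      tendsto_neg_powr[OF _ filterlim_real_sequentially]) auto
  have gauss_powr: "exp (- (x * sqrt (2 * ln (real p)))\<^sup>2/2) = real p powr (- x\<^sup>2)" if "1 \<le> p" for x p
  proof -
    have "(x * sqrt (2 * ln (real p)))\<^sup>2/2 = x\<^sup>2 * ln (real p)"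
      using that by (simp add: power_mult_distrib)
    then show ?thesis using that by (simp add: powr_def)
  qed
  have "eventually (\<lambda>p. 2 * real p powr (- e\<^sup>2) + 2 * real p powr (1 - (1+e)\<^sup>2) =
      2 * exp (- (e * sqrt (2 * ln (real p)))\<^sup>2/2)
     + real p * (2 * exp (- ((1+e) * sqrt (2 * ln (real p)))\<^sup>2/2))) sequentially"
    using eventually_ge_at_top[of "1::nat"]
  proof eventually_elim
    case (elim p)
    then have "real p * real p powr (- (1+e)\<^sup>2) = real p powr (1 - (1+e)\<^sup>2)"
      by (simp add: powr_diff powr_minus_divide)
    then show ?case using gauss_powr[OF elim, of e] gauss_powr[OF elim, of "1+e"]
      by (simp add: algebra_simps)
  qed
  then show ?thesis using Lim_transform_eventually[OF lim] by simp
qed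

text \<open>The bound on the p-value vanishes: its logarithm is
  \<open>((1+e)\<^sup>2 - (1+2e)\<^sup>2)/2 \<cdot> s\<^sup>2 + (1+e) s + const\<close> with \<open>s \<rightarrow> \<infinity>\<close>.\<close>
lemma pval_bound_tendsto_0:
  assumes e: "0 < e"
  shows "(\<lambda>p::nat. 2 * exp (- ((1+2*e) * sqrt (2 * ln (real p)))\<^sup>2/2)
     / std_normal_density ((1+e) * sqrt (2 * ln (real p)) + 1)) \<longlonglongrightarrow> 0"
proof -
  define A where "A = ((1+e)\<^sup>2 - (1+2*e)\<^sup>2) / 2"
  have A: "A < 0" using e unfolding A_def
    by (simp add: power2_eq_square algebra_simps) (smt (verit) mult_pos_pos)
  have eq: "2 * exp (- ((1+2*e) * x)\<^sup>2/2) / std_normal_density ((1+e) * x + 1)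
      = 2 * sqrt (2*pi) * exp (A * x\<^sup>2 + (1+e) * x + 1/2)" for x
  proof -
    have "((1+e) * x + 1)\<^sup>2 / 2 - ((1+2*e) * x)\<^sup>2/2 = A * x\<^sup>2 + (1+e) * x + 1/2"
      unfolding A_def by (simp add: power2_eq_square algebra_simps add_divide_distrib diff_divide_distrib)
    then have "exp (- ((1+2*e) * x)\<^sup>2/2) / exp (- ((1+e) * x + 1)\<^sup>2 / 2) = exp (A * x\<^sup>2 + (1+e) * x + 1/2)"
      by (simp add: exp_diff[symmetric])
    then show ?thesis unfolding std_normal_density_def by (simp add: field_simps)
  qed
  have "filterlim (\<lambda>p::nat. sqrt (2 * ln (real p))) at_top sequentially" by real_asymp
  then have "(\<lambda>p::nat. 2 * sqrt (2*pi) * exp (A * (sqrt (2 * ln (real p)))\<^sup>2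
      + (1+e) * sqrt (2 * ln (real p)) + 1/2)) \<longlonglongrightarrow> 2 * sqrt (2*pi) * 0"
    by (intro tendsto_mult tendsto_const exp_neg_quadratic_tendsto_0 A)
  then show ?thesis unfolding eq by simp
qed

lemma pval_tendsto_0_in_probability:
  assumes "r > 1" "0 < t"
  shows "(\<lambda>p. measure (noise_space p) {w \<in> space (noise_space p). t < \<bar>pval r p w\<bar>}) \<longlonglongrightarrow> 0"
proof (rule tendsto_sandwich[OF _ _ tendsto_const noise_bound_tendsto_0])
  define e where "e = (r - 1) / 3"
  show e: "0 < e" using assms by (simp add: e_def)
  have r: "r = 1 + 3 * e" by (simp add: e_def field_simps)
  have "eventually (\<lambda>p. 1 < p \<and> 2 * exp (- ((1+2*e) * sqrt (2 * ln (real p)))\<^sup>2/2)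
      / std_normal_density ((1+e) * sqrt (2 * ln (real p)) + 1) \<le> t) sequentially"
    using order_tendstoD(2)[OF pval_bound_tendsto_0[OF e] \<open>0 < t\<close>] eventually_gt_at_top[of 1]
    by eventually_elim simp
  then show "eventually (\<lambda>p. measure (noise_space p) {w \<in> space (noise_space p). t < \<bar>pval r p w\<bar>}
      \<le> 2 * exp (- (e * sqrt (2 * ln (real p)))\<^sup>2/2)
        + real p * (2 * exp (- ((1+e) * sqrt (2 * ln (real p)))\<^sup>2/2))) sequentially"
    by eventually_elim (use pval_tail_bound[OF _ e r refl] in blast)
qed simp

text \<open>Since the p-value is nonnegative and measurable, the event of a small p-value is
  the complement of the event of a large one.\<close>
lemma prob_pval_le:
  assumes "2 \<le> p"
  shows "measure (noise_space p) {w \<in> space (noise_space p). pval r p w \<le> \<alpha>}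
       = 1 - measure (noise_space p) {w \<in> space (noise_space p). \<alpha> < \<bar>pval r p w\<bar>}"
proof -
  interpret prob_space "noise_space p" by (rule prob_space_noise)
  have [measurable]: "pval r p \<in> borel_measurable (noise_space p)" by (rule pval_measurable[OF assms])
  have "{w \<in> space (noise_space p). pval r p w \<le> \<alpha>}
      = space (noise_space p) - {w \<in> space (noise_space p). \<alpha> < \<bar>pval r p w\<bar>}"
    using pval_nonneg by force
  then show ?thesis by (simp add: prob_compl)
qed

theorem mainTheorem3:
  fixes r :: real
  assumes "r > 1"
  shows "(\<forall>e>0. (\<lambda>p. measure (noise_space p)
                   {eps \<in> space (noise_space p). \<bar>pval r p eps\<bar> > e}) \<longlonglongrightarrow> 0)
       \<and> (\<forall>\<alpha>. 0 < \<alpha> \<and> \<alpha> < 1 \<longrightarrow>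
           (\<lambda>p. measure (noise_space p)
                   {eps \<in> space (noise_space p). pval r p eps \<le> \<alpha>}) \<longlonglongrightarrow> 1)"
proof (intro conjI allI impI)
  show "(\<lambda>p. measure (noise_space p) {w \<in> space (noise_space p). \<bar>pval r p w\<bar> > t}) \<longlonglongrightarrow> 0"
    if "t > 0" for t using pval_tendsto_0_in_probability[OF assms that] by simp
next
  fix \<alpha> :: real assume "0 < \<alpha> \<and> \<alpha> < 1"
  then have "(\<lambda>p. 1 - measure (noise_space p) {w \<in> space (noise_space p). \<alpha> < \<bar>pval r p w\<bar>})
      \<longlonglongrightarrow> 1 - 0"
    by (intro tendsto_diff tendsto_const pval_tendsto_0_in_probability assms) simp
  moreover have "eventually (\<lambda>p. 1 - measure (noise_space p) {w \<in> space (noise_space p). \<alpha> < \<bar>pval r p w\<bar>}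
      = measure (noise_space p) {w \<in> space (noise_space p). pval r p w \<le> \<alpha>}) sequentially"
    using eventually_ge_at_top[of 2] by eventually_elim (simp add: prob_pval_le)
  ultimately show "(\<lambda>p. measure (noise_space p) {w \<in> space (noise_space p). pval r p w \<le> \<alpha>}) \<longlonglongrightarrow> 1"
    using Lim_transform_eventually by fastforce
qed

end
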